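(* Let $H$ be a separated labeled hypergraph and let $H'$ be a minor of $H$. If $\mathcal A[H']\neq k[H']$, then $\mathcal A[H]\neq k[H]$.
   Context: Let $k$ be a field and $S=k[x_1,\dots,x_n,y]$. For an integral convex polytope $\mathcal P\subseteq\mathbb R^n_{\ge 0}$, the Ehrhart ring $\mathcal A[\mathcal P]$ is the $k$-subspace of $S$ spanned by the monomials $x^{\mathbf a}y^t$ with $t\in\mathbb N$, $\mathbf a\in t\mathcal P\cap\mathbb Z^n$; the polytopal ring is $k[\mathcal P]=k[x^{\mathbf a}y:\mathbf a\in\mathcal P\cap\mathbb Z^n]$. A labeled hypergraph $H=(V,f)$ on a finite set $V$ with alphabet $\{x_1,\dots,x_n\}$ is a function $f:\{x_1,\dots,x_n\}\to\mathcal P(V)$; its edges are the nonempty sets in the image of $f$. $H$ is separated if for all distinct $v,w\in V$ there are edges $F,G$ with $v\in F\setminus G$, $w\in G\setminus F$. For separated $H$, let $x^{\mathbf a_v}=\prod_{x:\,v\in f(x)}x$ for $v\in V$, let $\mathcal P_H=\mathrm{conv}\{\mathbf a_v:v\in V\}$, and $\mathcal A[H]=\mathcal A[\mathcal P_H]$, $k[H]=k[\mathcal P_H]$. For $W\subseteq V$, the induced subhypergraph is $H|_W=(W,f_W)$ with $f_W(x)=f(x)\cap W$. The deletion of an edge $E$ from $H$ is $H\setminus E=H|_{V\setminus E}$. A minor of $H$ is a labeled hypergraph obtained from $H$ by a finite sequence of edge deletions. *)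

theory Defs
  imports "HOL-Analysis.Analysis" "HOL-Library.Poly_Mapping"
begin

text \<open>The ring S = k[x_1,...,x_n,y] is modelled as polynomial mappings from
  monomials (finitely supported 'n option to nat maps) to the field 'k, where Some i stands for x_i
  and None stands for y.\<close>

type_synonym ('n, 'k) spoly = "('n option \<Rightarrow>\<^sub>0 nat) \<Rightarrow>\<^sub>0 'k"

definition xexp :: "(('n::finite) option \<Rightarrow>\<^sub>0 nat) \<Rightarrow> real ^ 'n" where
  "xexp m = (\<chi> i. real (Poly_Mapping.lookup m (Some i)))"

definition yexp :: "(('n::finite) option \<Rightarrow>\<^sub>0 nat) \<Rightarrow> nat" where
  "yexp m = Poly_Mapping.lookup m None"

text \<open>Dilation t P; for t = 0 we use the standard convention 0P = {0}
  (the degree-0 part of an Ehrhart ring is k).\<close>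
definition dilate :: "nat \<Rightarrow> (real ^ 'n) set \<Rightarrow> (real ^ 'n) set" where
  "dilate t P = (if t = 0 then {0} else (\<lambda>p. real t *\<^sub>R p) ` P)"

text \<open>Ehrhart ring: the k-span of the monomials x^a y^t with a in tP \<inter> Z^n,
  i.e. all polynomials supported on these monomials.\<close>
definition ehrhart_ring :: "(real ^ ('n::finite)) set \<Rightarrow> ('n, 'k::field) spoly set" where
  "ehrhart_ring P = {p. Poly_Mapping.keys p \<subseteq> {m. xexp m \<in> dilate (yexp m) P}}"

inductive_set subalgebra_gen :: "('n, 'k::field) spoly set \<Rightarrow> ('n, 'k) spoly set"
  for G where
  gen: "g \<in> G \<Longrightarrow> g \<in> subalgebra_gen G"
| const: "Poly_Mapping.single 0 c \<in> subalgebra_gen G"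
| add: "p \<in> subalgebra_gen G \<Longrightarrow> q \<in> subalgebra_gen G \<Longrightarrow> p + q \<in> subalgebra_gen G"
| mult: "p \<in> subalgebra_gen G \<Longrightarrow> q \<in> subalgebra_gen G \<Longrightarrow> p * q \<in> subalgebra_gen G"

definition polytopal_ring :: "(real ^ ('n::finite)) set \<Rightarrow> ('n, 'k::field) spoly set" where
  "polytopal_ring P = subalgebra_gen
     {Poly_Mapping.single m 1 | m. yexp m = 1 \<and> xexp m \<in> P}"

type_synonym ('v, 'n) lhg = "'v set \<times> ('n \<Rightarrow> 'v set)"

definition labeled_hypergraph :: "('v, 'n) lhg \<Rightarrow> bool" where
  "labeled_hypergraph H \<longleftrightarrow> finite (fst H) \<and> (\<forall>x. snd H x \<subseteq> fst H)"

definition edges :: "('v, 'n) lhg \<Rightarrow> 'v set set" where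
  "edges H = {snd H x | x. snd H x \<noteq> {}}"

definition separated :: "('v, 'n) lhg \<Rightarrow> bool" where
  "separated H \<longleftrightarrow> (\<forall>v\<in>fst H. \<forall>w\<in>fst H. v \<noteq> w \<longrightarrow>
      (\<exists>F\<in>edges H. \<exists>G\<in>edges H. v \<in> F \<and> v \<notin> G \<and> w \<in> G \<and> w \<notin> F))"

definition avec :: "('v, 'n::finite) lhg \<Rightarrow> 'v \<Rightarrow> real ^ 'n" where
  "avec H v = (\<chi> x. if v \<in> snd H x then 1 else 0)"

definition hg_polytope :: "('v, 'n::finite) lhg \<Rightarrow> (real ^ 'n) set" where
  "hg_polytope H = convex hull (avec H ` fst H)"

definition hg_ehrhart :: "('v, 'n::finite) lhg \<Rightarrow> ('n, 'k::field) spoly set" where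
  "hg_ehrhart H = ehrhart_ring (hg_polytope H)"

definition hg_ring :: "('v, 'n::finite) lhg \<Rightarrow> ('n, 'k::field) spoly set" where
  "hg_ring H = polytopal_ring (hg_polytope H)"

definition induced :: "('v, 'n) lhg \<Rightarrow> 'v set \<Rightarrow> ('v, 'n) lhg" where
  "induced H W = (W, \<lambda>x. snd H x \<inter> W)"

definition delete_edge :: "('v, 'n) lhg \<Rightarrow> 'v set \<Rightarrow> ('v, 'n) lhg" where
  "delete_edge H E = induced H (fst H - E)"

definition deletion_step :: "('v, 'n) lhg \<Rightarrow> ('v, 'n) lhg \<Rightarrow> bool" where
  "deletion_step H H' \<longleftrightarrow> (\<exists>E\<in>edges H. H' = delete_edge H E)"

definition is_minor :: "('v, 'n) lhg \<Rightarrow> ('v, 'n) lhg \<Rightarrow> bool" where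
  "is_minor H' H \<longleftrightarrow> deletion_step\<^sup>*\<^sup>* H H'"

end

theory Submission
  imports Defs
begin

text \<open>Deleting the edge \<open>E = f(x\<^sub>i)\<close> keeps exactly the vertices whose incidence vectors
  have \<open>i\<close>-th coordinate \<open>0\<close>; as \<open>\<P>\<^sub>H\<close> lies in the nonnegative orthant, \<open>\<P>\<^bsub>H \<setminus> E\<^esub>\<close> is its
  face \<open>\<P>\<^sub>H \<inter> {a\<^sub>i = 0}\<close>. For such a coordinate face \<open>Q\<close> of any \<open>P\<close>, discarding all
  monomials divisible by \<open>x\<^sub>i\<close> is a ring endomorphism of \<open>S\<close> mapping \<open>\<A>[P]\<close> onto \<open>\<A>[Q]\<close>
  and \<open>k[P]\<close> onto \<open>k[Q]\<close>. So \<open>\<A>[P] = k[P]\<close> forces \<open>\<A>[Q] = k[Q]\<close>, and induction along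
  the deletions gives the theorem.\<close>

lemma convex_hull_Int_supporting_hyperplane:
  fixes a :: "'a::real_inner"
  assumes nonneg: "\<And>x. x \<in> S \<Longrightarrow> 0 \<le> a \<bullet> x"
  shows "convex hull S \<inter> {x. a \<bullet> x = 0} = convex hull (S \<inter> {x. a \<bullet> x = 0})"
proof
  show "convex hull (S \<inter> {x. a \<bullet> x = 0}) \<subseteq> convex hull S \<inter> {x. a \<bullet> x = 0}"
    by (intro hull_minimal convex_Int convex_convex_hull convex_hyperplane)
       (auto simp: hull_inc)
next
  show "convex hull S \<inter> {x. a \<bullet> x = 0} \<subseteq> convex hull (S \<inter> {x. a \<bullet> x = 0})"
  proof clarify
    fix q assume "q \<in> convex hull S" and q: "a \<bullet> q = 0"
    then obtain T u where T: "finite T" "T \<subseteq> S" "\<forall>v\<in>T. 0 \<le> u v" "sum u T = 1"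
        and q_eq: "(\<Sum>v\<in>T. u v *\<^sub>R v) = q"
      unfolding convex_hull_explicit by blast
    have "(\<Sum>v\<in>T. u v * (a \<bullet> v)) = 0"
      using q unfolding q_eq[symmetric] by (simp add: inner_sum_right)
    moreover have "\<forall>v\<in>T. 0 \<le> u v * (a \<bullet> v)"
      using T(2,3) nonneg by (meson mult_nonneg_nonneg subsetD)
    ultimately have "\<forall>v\<in>T. u v * (a \<bullet> v) = 0"
      by (simp add: sum_nonneg_eq_0_iff[OF \<open>finite T\<close>])
    then have off: "u v = 0" if "v \<in> T" "a \<bullet> v \<noteq> 0" for v
      using that by auto
    define T' where "T' = T \<inter> {x. a \<bullet> x = 0}"
    have "sum u T' = sum u T" "(\<Sum>v\<in>T'. u v *\<^sub>R v) = (\<Sum>v\<in>T. u v *\<^sub>R v)"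
      using off \<open>finite T\<close> unfolding T'_def
      by (intro sum.mono_neutral_left; force)+
    then have "sum u T' = 1" "(\<Sum>v\<in>T'. u v *\<^sub>R v) = q"
      using T(4) q_eq by simp_all
    moreover have "finite T'" "T' \<subseteq> S \<inter> {x. a \<bullet> x = 0}" "\<forall>v\<in>T'. 0 \<le> u v"
      using T by (auto simp: T'_def)
    ultimately show "q \<in> convex hull (S \<inter> {x. a \<bullet> x = 0})"
      unfolding convex_hull_explicit by blast
  qed
qed

lift_definition restrict_keys :: "'a set \<Rightarrow> ('a \<Rightarrow>\<^sub>0 'b::zero) \<Rightarrow> 'a \<Rightarrow>\<^sub>0 'b"
  is "\<lambda>Z f m. if m \<in> Z then f m else 0"
  by (erule finite_subset[rotated]) auto

lemma keys_restrict_keys: "Poly_Mapping.keys (restrict_keys Z p) = Poly_Mapping.keys p \<inter> Z"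
  by (auto simp: in_keys_iff restrict_keys.rep_eq split: if_splits)

lemma restrict_keys_id: "Poly_Mapping.keys p \<subseteq> Z \<Longrightarrow> restrict_keys Z p = p"
  by (rule poly_mapping_eqI) (auto simp: restrict_keys.rep_eq in_keys_iff)

lemma restrict_keys_eq_zero: "Poly_Mapping.keys p \<inter> Z = {} \<Longrightarrow> restrict_keys Z p = 0"
  by (rule poly_mapping_eqI) (auto simp: restrict_keys.rep_eq in_keys_iff)

lemma restrict_keys_add:
  "restrict_keys Z (p + q) = restrict_keys Z p + restrict_keys Z (q :: 'a \<Rightarrow>\<^sub>0 'b::monoid_add)"
  by (rule poly_mapping_eqI) (simp add: restrict_keys.rep_eq lookup_add)

lemma restrict_keys_mult:
  fixes p q :: "'a::comm_monoid_add \<Rightarrow>\<^sub>0 'b::comm_ring"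
  assumes Z: "\<And>a b. a + b \<in> Z \<longleftrightarrow> a \<in> Z \<and> b \<in> Z"
  shows "restrict_keys Z (p * q) = restrict_keys Z p * restrict_keys Z q"
proof -
  define p1 q1 where "p1 = restrict_keys Z p" and "q1 = restrict_keys Z q"
  define p2 q2 where "p2 = p - p1" and "q2 = q - q1"
  have in_Z: "Poly_Mapping.keys p1 \<subseteq> Z" "Poly_Mapping.keys q1 \<subseteq> Z"
    by (simp_all add: p1_def q1_def keys_restrict_keys)
  have off_Z: "Poly_Mapping.keys p2 \<inter> Z = {}" "Poly_Mapping.keys q2 \<inter> Z = {}"
    by (auto simp: p2_def q2_def p1_def q1_def in_keys_iff lookup_minus restrict_keys.rep_eq)
  have main: "Poly_Mapping.keys (p1 * q1) \<subseteq> Z"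
    using keys_mult[of p1 q1] in_Z Z by blast
  have cross: "Poly_Mapping.keys (p1 * q2 + p2 * q) \<inter> Z = {}"
    using keys_add[of "p1 * q2" "p2 * q"] keys_mult[of p1 q2] keys_mult[of p2 q] off_Z Z
    by blast
  have "p * q = p1 * q1 + (p1 * q2 + p2 * q)"
    by (simp add: p2_def q2_def algebra_simps)
  then have "restrict_keys Z (p * q) = restrict_keys Z (p1 * q1) + restrict_keys Z (p1 * q2 + p2 * q)"
    by (simp only: restrict_keys_add)
  also have "\<dots> = p1 * q1"
    using main cross by (simp add: restrict_keys_id restrict_keys_eq_zero)
  finally show ?thesis
    by (simp add: p1_def q1_def)
qed

lemma subalgebra_gen_mono: "G \<subseteq> G' \<Longrightarrow> subalgebra_gen G \<subseteq> subalgebra_gen G'"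
proof
  fix p assume "p \<in> subalgebra_gen G" "G \<subseteq> G'"
  then show "p \<in> subalgebra_gen G'"
    by (induction rule: subalgebra_gen.induct) (auto intro: subalgebra_gen.intros)
qed

lemma keys_subalgebra_gen_subset:
  assumes Z: "\<And>a b. a + b \<in> Z \<longleftrightarrow> a \<in> Z \<and> b \<in> Z" "0 \<in> Z"
    and gens: "\<forall>g\<in>G. Poly_Mapping.keys g \<subseteq> Z"
    and p: "p \<in> subalgebra_gen G"
  shows "Poly_Mapping.keys p \<subseteq> Z"
  using p
proof (induction rule: subalgebra_gen.induct)
  case (add p q)
  then show ?case using keys_add[of p q] by blast
next
  case (mult p q)
  then show ?case using keys_mult[of p q] Z(1) by blast
qed (use gens Z(2) in auto)

lemma restrict_keys_subalgebra_gen: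
  assumes Z: "\<And>a b. a + b \<in> Z \<longleftrightarrow> a \<in> Z \<and> b \<in> Z" "0 \<in> Z"
    and gens: "restrict_keys Z ` G \<subseteq> subalgebra_gen G'"
    and p: "p \<in> subalgebra_gen G"
  shows "restrict_keys Z p \<in> subalgebra_gen G'"
  using p
proof (induction rule: subalgebra_gen.induct)
  case (const c)
  have "restrict_keys Z (Poly_Mapping.single 0 c) = Poly_Mapping.single 0 c"
    using Z(2) by (intro restrict_keys_id) auto
  then show ?case by (simp add: subalgebra_gen.const)
next
  case (add p q)
  then show ?case by (simp add: restrict_keys_add subalgebra_gen.add)
next
  case (mult p q)
  then show ?case by (simp add: restrict_keys_mult[OF Z(1)] subalgebra_gen.mult)
qed (use gens in auto)

definition monomials_avoiding :: "'n \<Rightarrow> ('n option \<Rightarrow>\<^sub>0 nat) set" where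
  "monomials_avoiding i = {m. Poly_Mapping.lookup m (Some i) = 0}"

lemma add_mem_monomials_avoiding_iff:
  "a + b \<in> monomials_avoiding i \<longleftrightarrow> a \<in> monomials_avoiding i \<and> b \<in> monomials_avoiding i"
  by (simp add: monomials_avoiding_def lookup_add)

lemma zero_mem_monomials_avoiding: "0 \<in> monomials_avoiding i"
  by (simp add: monomials_avoiding_def)

lemma mem_monomials_avoiding_iff_xexp:
  "m \<in> monomials_avoiding i \<longleftrightarrow> xexp m $ i = 0"
  by (simp add: monomials_avoiding_def xexp_def)

lemma dilate_Int_coordinate_hyperplane:
  "dilate t (P \<inter> {x. x $ i = 0}) = dilate t P \<inter> {x. x $ i = 0}"
proof (cases "t = 0")
  case False
  then show ?thesis
    unfolding dilate_def by (force simp: image_iff)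
qed (simp add: dilate_def)

lemma image_restrict_keys_support_subset:
  "restrict_keys Z ` {p. Poly_Mapping.keys p \<subseteq> A} = {p. Poly_Mapping.keys p \<subseteq> A \<inter> Z}"
proof (intro equalityI subsetI)
  fix q assume "q \<in> restrict_keys Z ` {p. Poly_Mapping.keys p \<subseteq> A}"
  then show "q \<in> {p. Poly_Mapping.keys p \<subseteq> A \<inter> Z}"
    by (auto simp only: keys_restrict_keys)
next
  fix p assume "p \<in> {p. Poly_Mapping.keys p \<subseteq> A \<inter> Z}"
  then have "p = restrict_keys Z p" "Poly_Mapping.keys p \<subseteq> A"
    by (simp_all add: restrict_keys_id)
  then show "p \<in> restrict_keys Z ` {p. Poly_Mapping.keys p \<subseteq> A}"
    by blast
qed

lemma ehrhart_ring_Int_coordinate_hyperplane: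
  "(ehrhart_ring (P \<inter> {x. x $ i = 0}) :: ('n::finite, 'k::field) spoly set)
     = restrict_keys (monomials_avoiding i) ` ehrhart_ring P"
proof -
  have "{m. xexp m \<in> dilate (yexp m) (P \<inter> {x. x $ i = 0})}
      = {m. xexp m \<in> dilate (yexp m) P} \<inter> monomials_avoiding i"
    by (auto simp: dilate_Int_coordinate_hyperplane mem_monomials_avoiding_iff_xexp)
  then show ?thesis
    by (simp add: ehrhart_ring_def image_restrict_keys_support_subset)
qed

lemma restrict_keys_single_mem_polytopal_ring:
  assumes "yexp m = 1" "xexp m \<in> P"
  shows "restrict_keys (monomials_avoiding i) (Poly_Mapping.single m 1)
           \<in> (polytopal_ring (P \<inter> {x. x $ i = 0}) :: ('n::finite, 'k::field) spoly set)"
proof (cases "m \<in> monomials_avoiding i")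
  case True
  then have "restrict_keys (monomials_avoiding i) (Poly_Mapping.single m (1::'k)) = Poly_Mapping.single m 1"
    by (intro restrict_keys_id) simp
  moreover have "xexp m \<in> P \<inter> {x. x $ i = 0}"
    using True assms(2) by (simp add: mem_monomials_avoiding_iff_xexp)
  ultimately show ?thesis
    using assms(1) unfolding polytopal_ring_def by (auto intro: subalgebra_gen.gen)
next
  case False
  then have "restrict_keys (monomials_avoiding i) (Poly_Mapping.single m (1::'k)) = 0"
    by (simp add: restrict_keys_eq_zero)
  moreover have "(0::('n, 'k) spoly) \<in> subalgebra_gen G" for G
    using subalgebra_gen.const[where c = 0 and G = G] by (simp only: single_zero)
  ultimately show ?thesis
    unfolding polytopal_ring_def by (simp only:)
qed

lemma polytopal_ring_Int_coordinate_hyperplane: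
  "(polytopal_ring (P \<inter> {x. x $ i = 0}) :: ('n::finite, 'k::field) spoly set)
     = restrict_keys (monomials_avoiding i) ` polytopal_ring P"
proof
  show "(polytopal_ring (P \<inter> {x. x $ i = 0}) :: ('n, 'k) spoly set)
      \<subseteq> restrict_keys (monomials_avoiding i) ` polytopal_ring P"
  proof
    fix p :: "('n, 'k) spoly"
    assume p: "p \<in> polytopal_ring (P \<inter> {x. x $ i = 0})"
    have gens: "\<forall>g \<in> {Poly_Mapping.single m (1::'k) | m. yexp m = 1 \<and> xexp m \<in> P \<inter> {x. x $ i = 0}}.
        Poly_Mapping.keys g \<subseteq> monomials_avoiding i"
      by (auto simp: mem_monomials_avoiding_iff_xexp)
    have "Poly_Mapping.keys p \<subseteq> monomials_avoiding i"
      using p unfolding polytopal_ring_def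
      by (rule keys_subalgebra_gen_subset[OF add_mem_monomials_avoiding_iff zero_mem_monomials_avoiding gens])
    moreover have "p \<in> polytopal_ring P"
      using p unfolding polytopal_ring_def by (rule subsetD[OF subalgebra_gen_mono, rotated]) auto
    ultimately show "p \<in> restrict_keys (monomials_avoiding i) ` polytopal_ring P"
      by (intro image_eqI[where x = p]) (simp_all add: restrict_keys_id)
  qed
  have gens: "restrict_keys (monomials_avoiding i) ` {Poly_Mapping.single m (1::'k) | m. yexp m = 1 \<and> xexp m \<in> P}
      \<subseteq> polytopal_ring (P \<inter> {x. x $ i = 0})"
    using restrict_keys_single_mem_polytopal_ring by blast
  show "restrict_keys (monomials_avoiding i) ` polytopal_ring P
      \<subseteq> (polytopal_ring (P \<inter> {x. x $ i = 0}) :: ('n, 'k) spoly set)"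
    using restrict_keys_subalgebra_gen[OF add_mem_monomials_avoiding_iff zero_mem_monomials_avoiding
        gens[unfolded polytopal_ring_def]]
    unfolding polytopal_ring_def by blast
qed

lemma ehrhart_eq_polytopal_Int_coordinate_hyperplane:
  assumes "(ehrhart_ring P :: ('n::finite, 'k::field) spoly set) = polytopal_ring P"
  shows "(ehrhart_ring (P \<inter> {x. x $ i = 0}) :: ('n, 'k) spoly set)
           = polytopal_ring (P \<inter> {x. x $ i = 0})"
  by (simp add: ehrhart_ring_Int_coordinate_hyperplane polytopal_ring_Int_coordinate_hyperplane assms)

lemma hg_polytope_delete_edge:
  "hg_polytope (delete_edge H (snd H i)) = hg_polytope H \<inter> {x. x $ i = 0}"
proof -
  have vertices: "avec (delete_edge H (snd H i)) ` fst (delete_edge H (snd H i))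
      = avec H ` fst H \<inter> {x. axis i 1 \<bullet> x = 0}"
    by (force simp: delete_edge_def induced_def avec_def inner_axis')
  have "convex hull (avec H ` fst H) \<inter> {x. axis i 1 \<bullet> x = 0}
      = convex hull (avec H ` fst H \<inter> {x. axis i 1 \<bullet> x = 0})"
    by (rule convex_hull_Int_supporting_hyperplane) (auto simp: avec_def inner_axis')
  then show ?thesis
    unfolding hg_polytope_def vertices by (simp add: inner_axis')
qed

lemma hg_ehrhart_eq_hg_ring_deletion_step:
  assumes "deletion_step H H'"
    and "(hg_ehrhart H :: ('n::finite, 'k::field) spoly set) = hg_ring H"
  shows "(hg_ehrhart H' :: ('n, 'k) spoly set) = hg_ring H'"
proof -
  obtain i where "H' = delete_edge H (snd H i)"
    using assms(1) by (auto simp: deletion_step_def edges_def)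
  then show ?thesis
    using assms(2) ehrhart_eq_polytopal_Int_coordinate_hyperplane
    by (simp add: hg_ehrhart_def hg_ring_def hg_polytope_delete_edge)
qed

lemma hg_ehrhart_eq_hg_ring_minor:
  assumes "is_minor H' H"
    and "(hg_ehrhart H :: ('n::finite, 'k::field) spoly set) = hg_ring H"
  shows "(hg_ehrhart H' :: ('n, 'k) spoly set) = hg_ring H'"
  using assms(1)[unfolded is_minor_def]
proof (induction rule: rtranclp_induct)
  case step
  then show ?case
    using hg_ehrhart_eq_hg_ring_deletion_step by blast
qed (use assms(2) in simp)

theorem theorem3p9:
  fixes H H' :: "('v, 'n::finite) lhg"
  assumes "labeled_hypergraph H"
    and "separated H"
    and "is_minor H' H"
    and "(hg_ehrhart H' :: ('n, 'k::field) spoly set) \<noteq> hg_ring H'"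
  shows "(hg_ehrhart H :: ('n, 'k) spoly set) \<noteq> hg_ring H"
  using hg_ehrhart_eq_hg_ring_minor[OF assms(3)] assms(4) by blast

end
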